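(* Let $L$ be a sublattice of $A_2$ of rank $2$. Then there exist $b_0,b_1\in L$ forming a basis of $L$ such that, with $b_2=-b_0-b_1$, the $3\times3$ matrix with rows $b_0,b_1,b_2$ has all off-diagonal entries $\le 0$. (Equivalently, $L$ is the Laplacian lattice of a regular digraph on three vertices.)
   Context: $A_2=\{x\in\mathbb Z^3:x_0+x_1+x_2=0\}$. A regular digraph is a directed multigraph in which each vertex has equal in-degree and out-degree; its Laplacian lattice is the lattice generated by the rows of its Laplacian matrix, which has the out-degrees on the diagonal and $-($number of arcs between the corresponding vertices$)$ off the diagonal. *)

theory Defs
  imports "HOL-Analysis.Analysis"
begin

text \<open>Vectors of Z^3 are modelled as int^3; paper coordinates x_0,x_1,x_2 are x$1,x$2,x$3.\<close>

definition A2 :: "(int^3) set" where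
  "A2 = {x. x$1 + x$2 + x$3 = 0}"

definition is_sublattice :: "(int^3) set \<Rightarrow> bool" where
  "is_sublattice L \<longleftrightarrow> 0 \<in> L \<and> (\<forall>x\<in>L. \<forall>y\<in>L. x + y \<in> L) \<and> (\<forall>x\<in>L. - x \<in> L)"

definition has_rank2 :: "(int^3) set \<Rightarrow> bool" where
  "has_rank2 L \<longleftrightarrow> (\<exists>u\<in>L. \<exists>v\<in>L. \<forall>m n :: int. m *s u + n *s v = 0 \<longrightarrow> m = 0 \<and> n = 0)"

definition is_basis2 :: "(int^3) set \<Rightarrow> int^3 \<Rightarrow> int^3 \<Rightarrow> bool" where
  "is_basis2 L b0 b1 \<longleftrightarrow> b0 \<in> L \<and> b1 \<in> L \<and>
     (\<forall>x\<in>L. \<exists>!mn :: int \<times> int. x = fst mn *s b0 + snd mn *s b1)"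

end

theory Submission
  imports Defs
begin

(* Project A2 onto the last two coordinates; this projection is injective on A2,
   so a vector of A2 is determined by its coordinates 2 and 3, and two vectors are dependent iff
   their 2x2 determinant det2 vanishes.  Call z a cone vector if z$2, z$3 <= 0 and
   z$2 + z$3 < 0, with height -(z$2 + z$3) > 0.
   (1) A rank-2 sublattice contains a cone vector; choose b0 of minimal height and, among
       those, with minimal -b0$2 (a "shortest cone vector").
   (2) Choose y in L with det2 b0 y > 0 minimal, and reduce it modulo b0 so that
       0 <= y$2 + y$3 < height b0.
   (3) b0, y form a basis: any z in L, reduced modulo y (using det2) and then modulo b0
       (using the height), becomes a cone-or-zero vector of height below that of b0, hence 0.
   (4) The minimality choices force y$3 <= 0 and y$2 >= -b0$2; together with the height bounds
       these are exactly the six off-diagonal sign conditions for the rows b0, y, -b0-y. *)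

lemma vec3_eq: "(x::int^3) = y \<longleftrightarrow> x$1 = y$1 \<and> x$2 = y$2 \<and> x$3 = y$3"
  by (simp add: vec_eq_iff forall_3)

lemma A2D: "x \<in> A2 \<Longrightarrow> x$1 = - x$2 - x$3"
  by (simp add: A2_def)

lemma A2_eq_zero: "x \<in> A2 \<Longrightarrow> x$2 = 0 \<Longrightarrow> x$3 = 0 \<Longrightarrow> x = 0"
  by (simp add: A2_def vec3_eq)

lemma A2_lincomb: "m *s u + n *s v \<in> A2" if "u \<in> A2" "v \<in> A2"
proof -
  have "(m *s u + n *s v)$1 + (m *s u + n *s v)$2 + (m *s u + n *s v)$3
      = m * (u$1 + u$2 + u$3) + n * (v$1 + v$2 + v$3)" by (simp add: algebra_simps)
  then show ?thesis using that by (simp add: A2_def)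
qed

lemma sl_add: "is_sublattice L \<Longrightarrow> x \<in> L \<Longrightarrow> y \<in> L \<Longrightarrow> x + y \<in> L"
  by (simp add: is_sublattice_def)

lemma sl_neg: "is_sublattice L \<Longrightarrow> x \<in> L \<Longrightarrow> - x \<in> L"
  by (simp add: is_sublattice_def)

lemma sl_diff: "is_sublattice L \<Longrightarrow> x \<in> L \<Longrightarrow> y \<in> L \<Longrightarrow> x - y \<in> L"
  using sl_add[of L x "-y"] sl_neg[of L y] by simp

lemma sl_smult_nat: "is_sublattice L \<Longrightarrow> x \<in> L \<Longrightarrow> int n *s x \<in> L"
proof (induction n)
  case 0
  then show ?case by (simp add: is_sublattice_def)
next
  case (Suc n)
  have "int (Suc n) *s x = int n *s x + x" by (simp add: vec_eq_iff algebra_simps)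
  then show ?case using Suc sl_add by metis
qed

lemma sl_smult:
  assumes "is_sublattice L" "x \<in> L"
  shows "k *s x \<in> L"
proof (cases "k \<ge> 0")
  case True
  then show ?thesis using sl_smult_nat[OF assms, of "nat k"] by simp
next
  case False
  then have "k *s x = - (int (nat (-k)) *s x)" by (simp add: vec_eq_iff)
  then show ?thesis using sl_neg[OF assms(1) sl_smult_nat[OF assms, of "nat (-k)"]] by simp
qed

section \<open>The determinant of the last two coordinates\<close>

definition det2 :: "int^3 \<Rightarrow> int^3 \<Rightarrow> int" where
  "det2 u v = u$2 * v$3 - u$3 * v$2"

lemma det2_simps:
  "det2 b (x + y) = det2 b x + det2 b y"
  "det2 b (x - y) = det2 b x - det2 b y"
  "det2 b (k *s x) = k * det2 b x"
  "det2 b (- x) = - det2 b x"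
  "det2 b b = 0"
  by (simp_all add: det2_def algebra_simps)

lemma det2_zero_dependent:
  assumes "det2 u v = 0"
  obtains m n :: int where "m \<noteq> 0 \<or> n \<noteq> 0"
    "(m *s u + n *s v)$2 = 0" "(m *s u + n *s v)$3 = 0"
proof (cases "u$2 = 0 \<and> v$2 = 0")
  case True
  show ?thesis
  proof (cases "u$3 = 0 \<and> v$3 = 0")
    case True
    then show ?thesis using \<open>u$2 = 0 \<and> v$2 = 0\<close> by (intro that[of 1 0]) auto
  next
    case False
    then show ?thesis using True by (intro that[of "v$3" "- u$3"]) (auto simp: algebra_simps)
  qed
next
  case False
  then show ?thesis using assms
    by (intro that[of "v$2" "- u$2"]) (auto simp: det2_def algebra_simps)
qed

lemma rank2_det2_nonzero:
  assumes "L \<subseteq> A2" "has_rank2 L"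
  shows "\<exists>u\<in>L. \<exists>v\<in>L. det2 u v \<noteq> 0"
proof (rule ccontr)
  assume no_pair: "\<not> ?thesis"
  obtain u v where uv: "u \<in> L" "v \<in> L"
    and indep: "\<forall>m n :: int. m *s u + n *s v = 0 \<longrightarrow> m = 0 \<and> n = 0"
    using assms(2) unfolding has_rank2_def by blast
  have "det2 u v = 0" using no_pair uv by blast
  then obtain m n where mn: "m \<noteq> 0 \<or> n \<noteq> 0"
    "(m *s u + n *s v)$2 = 0" "(m *s u + n *s v)$3 = 0"
    by (rule det2_zero_dependent)
  have "m *s u + n *s v \<in> A2" using uv assms(1) by (intro A2_lincomb) auto
  then have "m *s u + n *s v = 0" using mn by (intro A2_eq_zero)
  then show False using indep mn(1) by blast
qed

lemma det2_zero_trans: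
  assumes "b0$2 \<noteq> 0 \<or> b0$3 \<noteq> 0" "det2 b0 u = 0" "det2 b0 v = 0"
  shows "det2 u v = 0"
proof -
  have e1: "b0$2 * u$3 = b0$3 * u$2" and e2: "b0$2 * v$3 = b0$3 * v$2"
    using assms by (simp_all add: det2_def)
  have "b0$2 * det2 u v = u$2 * (b0$2 * v$3) - (b0$2 * u$3) * v$2"
    by (simp add: det2_def algebra_simps)
  also have "\<dots> = u$2 * (b0$3 * v$2) - (b0$3 * u$2) * v$2" using e1 e2 by simp
  also have "\<dots> = 0" by (simp add: algebra_simps)
  finally have first: "b0$2 * det2 u v = 0" .
  have "b0$3 * det2 u v = (b0$3 * u$2) * v$3 - u$3 * (b0$3 * v$2)"
    by (simp add: det2_def algebra_simps)
  also have "\<dots> = (b0$2 * u$3) * v$3 - u$3 * (b0$2 * v$3)" using e1 e2 by simp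
  also have "\<dots> = 0" by (simp add: algebra_simps)
  finally have "b0$3 * det2 u v = 0" .
  then show ?thesis using first assms(1) by auto
qed

section \<open>Cone vectors\<close>

definition cone_vec :: "int^3 \<Rightarrow> bool" where
  "cone_vec z \<longleftrightarrow> z$2 \<le> 0 \<and> z$3 \<le> 0 \<and> z$2 + z$3 < 0"

definition height :: "int^3 \<Rightarrow> int" where
  "height z = -(z$2 + z$3)"

definition shortest_cone_vec :: "(int^3) set \<Rightarrow> int^3 \<Rightarrow> bool" where
  "shortest_cone_vec L b0 \<longleftrightarrow> b0 \<in> L \<and> cone_vec b0 \<and>
     (\<forall>w\<in>L. cone_vec w \<longrightarrow> height b0 \<le> height w) \<and>
     (\<forall>w\<in>L. cone_vec w \<longrightarrow> height w = height b0 \<longrightarrow> - b0$2 \<le> - w$2)"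

lemma cone_vec_exists:
  assumes "is_sublattice L" "u \<in> L" "v \<in> L" "det2 u v \<noteq> 0"
  shows "\<exists>z\<in>L. cone_vec z"
proof -
  define z where "z = v$3 *s u - u$3 *s v"
  have zL: "z \<in> L" unfolding z_def using assms by (intro sl_diff sl_smult)
  have zc: "z$2 = det2 u v" "z$3 = 0" unfolding z_def by (simp_all add: det2_def algebra_simps)
  show ?thesis
  proof (cases "det2 u v > 0")
    case True
    then show ?thesis using sl_neg[OF assms(1) zL] zc by (intro bexI[of _ "- z"]) (auto simp: cone_vec_def)
  next
    case False
    then show ?thesis using zL zc assms(4) by (intro bexI[of _ z]) (auto simp: cone_vec_def)
  qed
qed

lemma shortest_cone_vec_exists:
  assumes "z \<in> L" "cone_vec z"
  shows "\<exists>b0. shortest_cone_vec L b0"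
proof -
  define P where "P w \<longleftrightarrow> w \<in> L \<and> cone_vec w" for w
  obtain zm where zm: "P zm" "\<forall>w. P w \<longrightarrow> nat (height zm) \<le> nat (height w)"
    using ex_has_least_nat[of P z "\<lambda>w. nat (height w)"] assms P_def by blast
  define Q where "Q w \<longleftrightarrow> P w \<and> height w = height zm" for w
  obtain b0 where b0: "Q b0" "\<forall>w. Q w \<longrightarrow> nat (- b0$2) \<le> nat (- w$2)"
    using ex_has_least_nat[of Q zm "\<lambda>w. nat (- w$2)"] zm(1) Q_def by blast
  have "height b0 \<le> height w" if "w \<in> L" "cone_vec w" for w
    using zm(2) that b0(1) by (auto simp: P_def Q_def height_def cone_vec_def)
  moreover have "- b0$2 \<le> - w$2" if "w \<in> L" "cone_vec w" "height w = height b0" for w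
    using b0 that by (auto simp: P_def Q_def cone_vec_def)
  ultimately show ?thesis using b0(1) unfolding shortest_cone_vec_def P_def Q_def by blast
qed

lemma parallel_to_cone:
  fixes a b s t :: int
  assumes "a \<le> 0" "b \<le> 0" "a + b < 0" "a * t = b * s" "s + t \<le> 0"
  shows "s \<le> 0 \<and> t \<le> 0"
proof (rule ccontr)
  assume "\<not> ?thesis"
  then consider "s > 0" "t < 0" | "t > 0" "s < 0" using assms(5) by linarith
  then show False
  proof cases
    case 1
    then have "a * t \<ge> 0" "b * s \<le> 0" using assms(1,2)
      by (simp_all add: mult_nonpos_nonpos mult_nonpos_nonneg)
    then show False using 1 assms(3,4) by (auto simp: mult_le_0_iff zero_le_mult_iff)
  next
    case 2
    then have "b * s \<ge> 0" "a * t \<le> 0" using assms(1,2)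
      by (simp_all add: mult_nonpos_nonpos mult_nonpos_nonneg)
    then show False using 2 assms(3,4) by (auto simp: mult_le_0_iff zero_le_mult_iff)
  qed
qed

section \<open>The second basis vector\<close>

definition minimal_cross :: "(int^3) set \<Rightarrow> int^3 \<Rightarrow> int^3 \<Rightarrow> bool" where
  "minimal_cross L b0 y \<longleftrightarrow> y \<in> L \<and> det2 b0 y > 0 \<and>
     (\<forall>z\<in>L. det2 b0 z \<noteq> 0 \<longrightarrow> det2 b0 y \<le> \<bar>det2 b0 z\<bar>)"

lemma minimal_cross_exists:
  assumes "is_sublattice L" "z \<in> L" "det2 b0 z \<noteq> 0"
  shows "\<exists>y. minimal_cross L b0 y"
proof -
  obtain x where x: "x \<in> L" "det2 b0 x \<noteq> 0"
    and xmin: "\<forall>w. w \<in> L \<and> det2 b0 w \<noteq> 0 \<longrightarrow> nat \<bar>det2 b0 x\<bar> \<le> nat \<bar>det2 b0 w\<bar>"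
    using ex_has_least_nat[of "\<lambda>w. w \<in> L \<and> det2 b0 w \<noteq> 0" z "\<lambda>w. nat \<bar>det2 b0 w\<bar>"] assms(2,3)
    by blast
  define y where "y = (if det2 b0 x > 0 then x else - x)"
  have "y \<in> L" unfolding y_def using x(1) sl_neg[OF assms(1) x(1)] by simp
  moreover have "det2 b0 y = \<bar>det2 b0 x\<bar>" unfolding y_def using x by (auto simp: det2_simps)
  ultimately show ?thesis using x xmin unfolding minimal_cross_def
    by (intro exI[of _ y]) auto
qed

text \<open>Adding a multiple of b0 does not change det2 b0, so the partner can be chosen with
  coordinate sum y$2 + y$3 in the range [0, height b0).\<close>
lemma minimal_cross_reduce:
  assumes "is_sublattice L" "b0 \<in> L" "cone_vec b0" "minimal_cross L b0 x"
  shows "\<exists>y. minimal_cross L b0 y \<and> 0 \<le> y$2 + y$3 \<and> y$2 + y$3 < height b0"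
proof -
  have hpos: "height b0 > 0" using assms(3) by (simp add: cone_vec_def height_def)
  define y where "y = x + ((x$2 + x$3) div height b0) *s b0"
  have "y \<in> L" unfolding y_def using assms minimal_cross_def by (auto intro: sl_add sl_smult)
  moreover have "det2 b0 y = det2 b0 x" unfolding y_def by (simp add: det2_simps)
  moreover have "y$2 + y$3 = (x$2 + x$3) mod height b0"
    unfolding y_def by (simp add: height_def algebra_simps minus_div_mult_eq_mod[symmetric])
  ultimately show ?thesis using assms(4) hpos unfolding minimal_cross_def
    by (intro exI[of _ y]) auto
qed

lemma shortest_cone_basis:
  assumes S: "is_sublattice L" and A: "L \<subseteq> A2"
    and b0: "shortest_cone_vec L b0" and y: "minimal_cross L b0 y"
  shows "is_basis2 L b0 y"
  unfolding is_basis2_def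
proof (intro conjI ballI)
  have b0L: "b0 \<in> L" and cone: "cone_vec b0"
    and minh: "\<And>w. w \<in> L \<Longrightarrow> cone_vec w \<Longrightarrow> height b0 \<le> height w"
    using b0 by (auto simp: shortest_cone_vec_def)
  have yL: "y \<in> L" and Dpos: "det2 b0 y > 0"
    and minD: "\<And>z. z \<in> L \<Longrightarrow> det2 b0 z \<noteq> 0 \<Longrightarrow> det2 b0 y \<le> \<bar>det2 b0 z\<bar>"
    using y by (auto simp: minimal_cross_def)
  show "b0 \<in> L" "y \<in> L" by fact+
  fix z assume z: "z \<in> L"
  define k where "k = det2 b0 z div det2 b0 y"
  define z1 where "z1 = z - k *s y"
  have z1L: "z1 \<in> L" unfolding z1_def using S z yL by (intro sl_diff sl_smult)
  have "det2 b0 z1 = det2 b0 z mod det2 b0 y"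
    unfolding z1_def k_def by (simp add: det2_simps minus_mult_div_eq_mod minus_div_mult_eq_mod)
  then have dz1: "det2 b0 z1 = 0"
    using minD[OF z1L] Dpos by (metis abs_of_nonneg not_le pos_mod_bound pos_mod_sign)
  define j where "j = (-(z1$2 + z1$3)) div height b0"
  define w where "w = z1 - j *s b0"
  have wL: "w \<in> L" unfolding w_def using S z1L b0L by (intro sl_diff sl_smult)
  have hpos: "height b0 > 0" using cone by (simp add: cone_vec_def height_def)
  have "height w = (-(z1$2 + z1$3)) mod height b0"
    unfolding w_def j_def height_def by (simp add: algebra_simps minus_div_mult_eq_mod[symmetric])
  then have hw: "0 \<le> height w" "height w < height b0" using hpos by auto
  have "det2 b0 w = 0" unfolding w_def using dz1 by (simp add: det2_simps)
  then have sw: "w$2 \<le> 0 \<and> w$3 \<le> 0"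
    using parallel_to_cone[of "b0$2" "b0$3" "w$3" "w$2"] cone hw
    by (simp add: cone_vec_def height_def det2_def)
  have "height w = 0"
    using minh[OF wL] sw hw by (force simp: cone_vec_def height_def)
  then have "w = 0" using sw wL A by (intro A2_eq_zero) (auto simp: height_def)
  then have zeq: "z = j *s b0 + k *s y" unfolding w_def z1_def by (simp add: algebra_simps)
  show "\<exists>!mn. z = fst mn *s b0 + snd mn *s y"
  proof (rule ex1I[of _ "(j, k)"])
    show "z = fst (j, k) *s b0 + snd (j, k) *s y" using zeq by simp
  next
    fix mn assume H: "z = fst mn *s b0 + snd mn *s y"
    obtain a c where mn: "mn = (a, c)" by (cases mn)
    have e: "a *s b0 + c *s y = j *s b0 + k *s y" using H zeq mn by simp
    from arg_cong[OF e, of "det2 b0"] have "c * det2 b0 y = k * det2 b0 y"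
      by (simp add: det2_simps)
    then have ck: "c = k" using Dpos by simp
    then have "(a *s b0)$2 + (a *s b0)$3 = (j *s b0)$2 + (j *s b0)$3" using e by simp
    then have "a * (b0$2 + b0$3) = j * (b0$2 + b0$3)" by (simp add: algebra_simps)
    then have "a = j" using cone by (simp add: cone_vec_def)
    then show "mn = (j, k)" using mn ck by simp
  qed
qed

lemma reduced_partner_signs:
  assumes S: "is_sublattice L" and b0: "shortest_cone_vec L b0"
    and y: "y \<in> L" "det2 b0 y > 0" "0 \<le> y$2 + y$3" "y$2 + y$3 < height b0"
  shows "y$3 \<le> 0" "- b0$2 \<le> y$2"
proof -
  have b0L: "b0 \<in> L" and cone: "cone_vec b0"
    and minh: "\<And>w. w \<in> L \<Longrightarrow> cone_vec w \<Longrightarrow> height b0 \<le> height w"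
    and minp: "\<And>w. w \<in> L \<Longrightarrow> cone_vec w \<Longrightarrow> height w = height b0 \<Longrightarrow> - b0$2 \<le> - w$2"
    using b0 by (auto simp: shortest_cone_vec_def)
  have det: "b0$2 * y$3 - b0$3 * y$2 > 0" using y(2) by (simp add: det2_def)
  show t: "y$3 \<le> 0"
  proof (rule ccontr)
    assume "\<not> y$3 \<le> 0"
    then have "b0$2 * y$3 \<le> 0" using cone by (simp add: cone_vec_def mult_nonpos_nonneg)
    then have "b0$3 * y$2 < 0" using det by linarith
    then have "y$2 > 0" using cone by (auto simp: cone_vec_def mult_less_0_iff)
    then have "cone_vec (- y)" using \<open>\<not> y$3 \<le> 0\<close> by (simp add: cone_vec_def)
    then have "height b0 \<le> height (- y)" using minh sl_neg[OF S y(1)] by blast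
    then show False using y(3,4) by (simp add: height_def)
  qed
  show "- b0$2 \<le> y$2"
  proof (rule ccontr)
    assume "\<not> - b0$2 \<le> y$2"
    have wL: "y + b0 \<in> L" using S y(1) b0L by (rule sl_add)
    have wc: "cone_vec (y + b0)" using \<open>\<not> - b0$2 \<le> y$2\<close> t cone by (simp add: cone_vec_def)
    have "height b0 \<le> height (y + b0)" using minh[OF wL wc] .
    then have "y$2 + y$3 = 0" using y(3) by (simp add: height_def)
    then have "height (y + b0) = height b0" by (simp add: height_def)
    then have "y$2 \<le> 0" using minp[OF wL wc] by simp
    then have "y$2 = 0" "y$3 = 0" using \<open>y$2 + y$3 = 0\<close> t by linarith+
    then show False using det by simp
  qed
qed

theorem mainTheorem17:
  fixes L :: "(int^3) set"
  assumes "is_sublattice L" and "L \<subseteq> A2" and "has_rank2 L"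
  shows "\<exists>b0 b1. is_basis2 L b0 b1 \<and>
           (let b = (\<lambda>k::3. if k = 1 then b0 else if k = 2 then b1 else - b0 - b1)
            in \<forall>i j :: 3. i \<noteq> j \<longrightarrow> b i $ j \<le> 0)"
proof -
  note S = assms(1) and A = assms(2)
  obtain u v where uv: "u \<in> L" "v \<in> L" "det2 u v \<noteq> 0"
    using rank2_det2_nonzero[OF A assms(3)] by blast
  obtain b0 where b0: "shortest_cone_vec L b0"
    using cone_vec_exists[OF S uv] shortest_cone_vec_exists by blast
  then have b0L: "b0 \<in> L" and cone: "cone_vec b0" by (simp_all add: shortest_cone_vec_def)
  have "\<exists>z\<in>L. det2 b0 z \<noteq> 0"
    using det2_zero_trans[of b0 u v] cone uv by (auto simp: cone_vec_def)
  then obtain y where y: "minimal_cross L b0 y" "0 \<le> y$2 + y$3" "y$2 + y$3 < height b0"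
    using minimal_cross_exists[OF S] minimal_cross_reduce[OF S b0L cone] by blast
  have yL: "y \<in> L" and ypos: "det2 b0 y > 0" using y(1) by (simp_all add: minimal_cross_def)
  note signs = reduced_partner_signs[OF S b0 yL ypos y(2,3)]
  have "b0$1 = - b0$2 - b0$3" "y$1 = - y$2 - y$3" using A b0L yL by (auto intro: A2D)
  then have c: "b0$2 \<le> 0" "b0$3 \<le> 0" "y$1 \<le> 0" "y$3 \<le> 0" "(- b0 - y)$1 \<le> 0" "(- b0 - y)$2 \<le> 0"
    using cone y(2,3) signs by (simp_all add: cone_vec_def height_def)
  have n: "(1::3) \<noteq> 2" "(1::3) \<noteq> 3" "(2::3) \<noteq> 3" by simp_all
  show ?thesis
    using shortest_cone_basis[OF S A b0 y(1)] c n
    by (intro exI[of _ b0] exI[of _ y] conjI)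
      (simp_all only: Let_def forall_3 if_True if_False n n[symmetric] simp_thms)
qed

end
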